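(* The class of data languages accepted by SAFA is not closed under intersection: there exist data languages $L_1,L_2\subseteq(\Sigma\times D)^*$, each accepted by some SAFA, such that no SAFA accepts $L_1\cap L_2$.
   Context: $D$ is a fixed countably infinite set of data values; for a finite alphabet $\Sigma$, data words are elements of $(\Sigma\times D)^*$. A set augmented finite automaton (SAFA) is a tuple $M=(Q,\Sigma\times D,q_0,F,H,\delta)$: $Q$ finite set of states, $q_0\in Q$ initial, $F\subseteq Q$ final, $H=\{h_1,\dots,h_m\}$ a finite collection of (names of) sets of data values, $\delta\subseteq Q\times\Sigma\times C\times OP\times Q$ with $C=\{p(h_i),\,!p(h_i): h_i\in H\}$, $OP=\{-\}\cup\{\mathsf{ins}(h_i):h_i\in H\}$. Configurations are $(q,\langle S_1,\dots,S_m\rangle)$ with $S_i\subseteq D$ finite; initially state $q_0$ and all sets empty. On reading $(a,d)$, a transition $(q,a,\alpha,op,q')$ from the current state may be taken if $\alpha=p(h_i)$ and $d\in S_i$, or $\alpha=\,!p(h_i)$ and $d\notin S_i$; then the state becomes $q'$ and if $op=\mathsf{ins}(h_j)$ the value $d$ is added to $S_j$ ($op=-$ changes nothing). A word is accepted if some run reads it entirely and ends in $F$; $L(M)$ is the set of accepted words. *)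

theory Defs
  imports Main
begin

text \<open>States of an automaton are natural numbers (a finite set Q of them);
  the set names h_1..h_m are the indices 0..<m.\<close>

type_synonym data = nat
type_synonym 'a dword = "('a \<times> data) list"

datatype cond = Mem nat | NotMem nat
datatype oper = NoOp | Ins nat

record 'a safa =
  states :: "nat set"
  init   :: nat
  final  :: "nat set"
  nsets  :: nat
  trans  :: "(nat \<times> 'a \<times> cond \<times> oper \<times> nat) set"

fun cond_idx :: "cond \<Rightarrow> nat" where
  "cond_idx (Mem i) = i" | "cond_idx (NotMem i) = i"

fun oper_ok :: "nat \<Rightarrow> oper \<Rightarrow> bool" where
  "oper_ok m NoOp = True" | "oper_ok m (Ins j) = (j < m)"

definition wf_safa :: "('a::finite) safa \<Rightarrow> bool" where
  "wf_safa M \<longleftrightarrow> finite (states M) \<and> init M \<in> states M \<and> final M \<subseteq> states M \<and>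
     (\<forall>(q,a,\<alpha>,op,q') \<in> trans M. q \<in> states M \<and> q' \<in> states M \<and>
        cond_idx \<alpha> < nsets M \<and> oper_ok (nsets M) op)"

fun sat :: "cond \<Rightarrow> (nat \<Rightarrow> data set) \<Rightarrow> data \<Rightarrow> bool" where
  "sat (Mem i) S d = (d \<in> S i)"
| "sat (NotMem i) S d = (d \<notin> S i)"

fun apply_op :: "oper \<Rightarrow> (nat \<Rightarrow> data set) \<Rightarrow> data \<Rightarrow> (nat \<Rightarrow> data set)" where
  "apply_op NoOp S d = S"
| "apply_op (Ins j) S d = S(j := insert d (S j))"

type_synonym config = "nat \<times> (nat \<Rightarrow> data set)"

inductive run :: "'a safa \<Rightarrow> config \<Rightarrow> 'a dword \<Rightarrow> config \<Rightarrow> bool" for M where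
  run_nil: "run M c [] c"
| run_cons: "\<lbrakk> (q, a, \<alpha>, op, q') \<in> trans M; sat \<alpha> S d;
              run M (q', apply_op op S d) w c' \<rbrakk>
             \<Longrightarrow> run M (q, S) ((a, d) # w) c'"

definition lang :: "'a safa \<Rightarrow> 'a dword set" where
  "lang M = {w. \<exists>q S. run M (init M, \<lambda>_. {}) w (q, S) \<and> q \<in> final M}"

definition safa_recognizable :: "('a::finite) dword set \<Rightarrow> bool" where
  "safa_recognizable L \<longleftrightarrow> (\<exists>M. wf_safa M \<and> lang M = L)"

end

theory Submission
  imports Defs
begin

text \<open>
  Both languages consist of words of length four and are accepted by chain automata with a single
  set: one stores \<open>d\<^sub>1, d\<^sub>2\<close> and tests \<open>d\<^sub>3\<close> against them, the other stores
  \<open>d\<^sub>2\<close> alone and tests \<open>d\<^sub>4\<close> against it. Suppose some SAFA accepts the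
  intersection, and follow an accepting run on data \<open>1 2 3 2\<close>. The last guard must test
  membership in a set containing \<open>2\<close> but not \<open>1\<close>, otherwise a fourth value \<open>4\<close>
  or \<open>1\<close> would be accepted. The third guard must be a non-membership test against a set
  containing both \<open>1\<close> and \<open>2\<close>, otherwise a third value \<open>1\<close> or \<open>2\<close> would be
  accepted. But the value \<open>2\<close> was read only once, so it lies in at most one set.
\<close>

lemma run_Nil_iff: "run M c [] c' \<longleftrightarrow> c' = c"
  by (auto elim: run.cases intro: run.intros)

lemma run_Cons_iff:
  "run M (q, S) ((a, d) # w) c' \<longleftrightarrow>
     (\<exists>\<alpha> op q'. (q, a, \<alpha>, op, q') \<in> trans M \<and> sat \<alpha> S d \<and> run M (q', apply_op op S d) w c')"
  by (rule iffI, erule run.cases, auto intro: run.intros)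

lemma run_append_iff: "run M c (u @ v) c'' \<longleftrightarrow> (\<exists>c'. run M c u c' \<and> run M c' v c'')"
proof (induction u arbitrary: c)
  case Nil
  then show ?case by (simp add: run_Nil_iff)
next
  case (Cons x u)
  obtain q S a d where "c = (q, S)" "x = (a, d)" by fastforce
  then show ?case by (simp add: run_Cons_iff Cons.IH) blast
qed

definition accepts_from :: "'a safa \<Rightarrow> config \<Rightarrow> 'a dword \<Rightarrow> bool" where
  "accepts_from M c w \<longleftrightarrow> (\<exists>c'. run M c w c' \<and> fst c' \<in> final M)"

lemma accepts_from_Nil: "accepts_from M (q, S) [] \<longleftrightarrow> q \<in> final M"
  by (simp add: accepts_from_def run_Nil_iff)

lemma accepts_from_Cons:
  "accepts_from M (q, S) ((a, d) # w) \<longleftrightarrow>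
     (\<exists>\<alpha> op q'. (q, a, \<alpha>, op, q') \<in> trans M \<and> sat \<alpha> S d \<and> accepts_from M (q', apply_op op S d) w)"
  unfolding accepts_from_def run_Cons_iff by blast

lemma lang_append_iff:
  "u @ v \<in> lang M \<longleftrightarrow> (\<exists>c. run M (init M, \<lambda>_. {}) u c \<and> accepts_from M c v)"
  by (auto simp: lang_def accepts_from_def run_append_iff)

lemma apply_op_mono: "S j \<subseteq> apply_op op S d j"
  by (cases op) auto

lemma apply_op_subset_insert: "apply_op op S d j \<subseteq> insert d (S j)"
  by (cases op) auto

lemma apply_op_fresh_unique:
  assumes "\<forall>j. d \<notin> S j" "d \<in> apply_op op S d j" "d \<in> apply_op op S d k"
  shows "j = k"
  using assms by (cases op) (auto split: if_splits)

definition data_lang :: "data list set \<Rightarrow> 'a dword set" where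
  "data_lang D = {w. map snd w \<in> D}"

lemma data_lang_Int: "data_lang D \<inter> data_lang E = data_lang (D \<inter> E)"
  by (auto simp: data_lang_def)

definition chain_safa :: "nat \<Rightarrow> (cond \<times> oper) set list \<Rightarrow> 'a safa" where
  "chain_safa m Cs = \<lparr>states = {0..length Cs}, init = 0, final = {length Cs}, nsets = m,
     trans = {(i, a, c, op, Suc i) | i a c op. i < length Cs \<and> (c, op) \<in> Cs ! i}\<rparr>"

fun chain_accepts :: "(cond \<times> oper) set list \<Rightarrow> (nat \<Rightarrow> data set) \<Rightarrow> data list \<Rightarrow> bool" where
  "chain_accepts [] S ds \<longleftrightarrow> ds = []"
| "chain_accepts (C # Cs) S [] \<longleftrightarrow> False"
| "chain_accepts (C # Cs) S (d # ds) \<longleftrightarrow>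
     (\<exists>(c, op) \<in> C. sat c S d \<and> chain_accepts Cs (apply_op op S d) ds)"

lemma trans_chain_safa_iff:
  "(i, a, c, op, q') \<in> trans (chain_safa m Cs) \<longleftrightarrow> i < length Cs \<and> (c, op) \<in> Cs ! i \<and> q' = Suc i"
  by (auto simp: chain_safa_def)

lemma final_chain_safa [simp]: "final (chain_safa m Cs) = {length Cs}"
  by (simp add: chain_safa_def)

lemma run_chain_safa_iff:
  assumes "i \<le> length Cs"
  shows "(\<exists>S'. run (chain_safa m Cs) (i, S) w (length Cs, S')) \<longleftrightarrow>
           chain_accepts (drop i Cs) S (map snd w)"
  using assms
proof (induction w arbitrary: i S)
  case Nil
  then show ?case by (cases "drop i Cs") (auto simp: run_Nil_iff)
next
  case (Cons x w)
  obtain a d where x: "x = (a, d)" by fastforce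
  show ?case
  proof (cases "i = length Cs")
    case True
    then show ?thesis by (simp add: x run_Cons_iff trans_chain_safa_iff)
  next
    case False
    with Cons.prems have "i < length Cs" by simp
    then have "drop i Cs = Cs ! i # drop (Suc i) Cs"
      by (simp add: Cons_nth_drop_Suc)
    with \<open>i < length Cs\<close> show ?thesis
      using Cons.IH[of "Suc i"] by (simp add: x run_Cons_iff trans_chain_safa_iff) blast
  qed
qed

lemma lang_chain_safa: "lang (chain_safa m Cs) = data_lang {ds. chain_accepts Cs (\<lambda>_. {}) ds}"
  using run_chain_safa_iff[of 0 Cs m "\<lambda>_. {}"]
  by (auto simp: lang_def data_lang_def chain_safa_def)

lemma wf_chain_safa:
  assumes "\<forall>C \<in> set Cs. \<forall>(c, op) \<in> C. cond_idx c < m \<and> oper_ok m op"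
  shows "wf_safa (chain_safa m Cs :: ('a::finite) safa)"
  using assms by (auto simp: wf_safa_def chain_safa_def)

lemma chain_accepts_length: "chain_accepts Cs S ds \<Longrightarrow> length ds = length Cs"
  by (induction Cs S ds rule: chain_accepts.induct) auto

lemma safa_recognizable_chain_safa:
  assumes "\<forall>C \<in> set Cs. \<forall>(c, op) \<in> C. cond_idx c < m \<and> oper_ok m op"
  shows "safa_recognizable (data_lang {ds. chain_accepts Cs (\<lambda>_. {}) ds} :: ('a::finite) dword set)"
  unfolding safa_recognizable_def using wf_chain_safa[OF assms] lang_chain_safa by blast

lemma Collect_chain_accepts_length_4:
  assumes "length Cs = 4" and "\<And>d1 d2 d3 d4. chain_accepts Cs S [d1, d2, d3, d4] \<longleftrightarrow> P d1 d2 d3 d4"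
  shows "{ds. chain_accepts Cs S ds} = {[d1, d2, d3, d4] | d1 d2 d3 d4. P d1 d2 d3 d4}"
proof (intro set_eqI iffI)
  fix ds
  assume "ds \<in> {ds. chain_accepts Cs S ds}"
  then have "length ds = 4" "chain_accepts Cs S ds"
    using chain_accepts_length assms(1) by auto
  then show "ds \<in> {[d1, d2, d3, d4] | d1 d2 d3 d4. P d1 d2 d3 d4}"
    using assms(2) by (auto simp: numeral_eq_Suc length_Suc_conv)
qed (use assms(2) in auto)

definition first_three_distinct :: "data list set" where
  "first_three_distinct = {[d1, d2, d3, d4] | d1 d2 d3 d4. d1 \<noteq> d2 \<and> d3 \<notin> {d1, d2}}"

definition fourth_eq_second :: "data list set" where
  "fourth_eq_second = {[d1, d2, d3, d4] | d1 d2 d3 d4. d4 = d2}"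

lemma safa_recognizable_first_three_distinct:
  "safa_recognizable (data_lang first_three_distinct :: ('a::finite) dword set)"
proof -
  \<comment> \<open>There is no unconditional guard: the choice of \<open>Mem 0\<close> or \<open>NotMem 0\<close> admits every value.\<close>
  let ?Cs = "[{(NotMem 0, Ins 0)}, {(NotMem 0, Ins 0)}, {(NotMem 0, NoOp)},
              {(Mem 0, NoOp), (NotMem 0, NoOp)}]"
  have "{ds. chain_accepts ?Cs (\<lambda>_. {}) ds} = first_three_distinct"
    unfolding first_three_distinct_def by (rule Collect_chain_accepts_length_4) auto
  moreover have "safa_recognizable (data_lang {ds. chain_accepts ?Cs (\<lambda>_. {}) ds} :: 'a dword set)"
    by (rule safa_recognizable_chain_safa) auto
  ultimately show ?thesis by simp
qed

lemma safa_recognizable_fourth_eq_second: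
  "safa_recognizable (data_lang fourth_eq_second :: ('a::finite) dword set)"
proof -
  let ?Cs = "[{(NotMem 0, NoOp)}, {(NotMem 0, Ins 0)}, {(Mem 0, NoOp), (NotMem 0, NoOp)},
              {(Mem 0, NoOp)}]"
  have "{ds. chain_accepts ?Cs (\<lambda>_. {}) ds} = fourth_eq_second"
    unfolding fourth_eq_second_def by (rule Collect_chain_accepts_length_4) auto
  moreover have "safa_recognizable (data_lang {ds. chain_accepts ?Cs (\<lambda>_. {}) ds} :: 'a dword set)"
    by (rule safa_recognizable_chain_safa) auto
  ultimately show ?thesis by simp
qed

lemma lang_neq_first_three_distinct_Int_fourth_eq_second:
  "lang M \<noteq> data_lang (first_three_distinct \<inter> fourth_eq_second)"
proof
  assume L: "lang M = data_lang (first_three_distinct \<inter> fourth_eq_second)"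
  fix a
  have "[(a, 1), (a, 2)] @ [(a, 3), (a, 2)] \<in> lang M"
    by (simp add: L data_lang_def first_three_distinct_def fourth_eq_second_def)
  then obtain q S where prefix: "run M (init M, \<lambda>_. {}) [(a, 1), (a, 2)] (q, S)"
    and acc: "accepts_from M (q, S) [(a, 3), (a, 2)]"
    unfolding lang_append_iff split_paired_Ex by blast
  have rejected: "d3 \<notin> {1, 2} \<and> d4 = 2" if "accepts_from M (q, S) [(a, d3), (a, d4)]" for d3 d4
  proof -
    have "[(a, 1), (a, 2)] @ [(a, d3), (a, d4)] \<in> lang M"
      using prefix that unfolding lang_append_iff by blast
    then show ?thesis
      by (auto simp: L data_lang_def first_three_distinct_def fourth_eq_second_def)
  qed
  from prefix obtain op1 op2 where S: "S = apply_op op2 (apply_op op1 (\<lambda>_. {}) 1) 2"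
    by (auto simp: run_Cons_iff run_Nil_iff)
  have S_bound: "S j \<subseteq> {1, 2}" for j
    unfolding S using apply_op_subset_insert by (cases op1; cases op2) auto
  have S_unique: "j = k" if "2 \<in> S j" "2 \<in> S k" for j k
    using that unfolding S by (rule apply_op_fresh_unique[rotated]) (cases op1; auto)
  from acc obtain \<alpha> op q' \<beta> op' q'' where
    t3: "(q, a, \<alpha>, op, q') \<in> trans M" and s3: "sat \<alpha> S 3" and
    t4: "(q', a, \<beta>, op', q'') \<in> trans M" and s4: "sat \<beta> (apply_op op S 3) 2" and
    fin: "q'' \<in> final M"
    by (auto simp: accepts_from_Cons accepts_from_Nil)
  have accepted: "accepts_from M (q, S) [(a, d3), (a, d4)]"
    if "sat \<alpha> S d3" "sat \<beta> (apply_op op S d3) d4" for d3 d4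
    using that t3 t4 fin unfolding accepts_from_Cons accepts_from_Nil by blast
  obtain i where \<beta>: "\<beta> = Mem i" and "2 \<in> S i" "1 \<notin> S i"
  proof (cases \<beta>)
    case (NotMem i)
    have "4 \<notin> apply_op op S 3 i"
      using apply_op_subset_insert[of op S 3 i] S_bound[of i] by fastforce
    then show ?thesis
      using rejected[OF accepted[of 3 4]] s3 NotMem by simp
  next
    case (Mem i)
    have "1 \<notin> apply_op op S 3 i"
      using rejected[of 3 1] accepted[of 3 1] s3 Mem by auto
    moreover have "2 \<in> apply_op op S 3 i"
      using s4 Mem by simp
    ultimately show ?thesis
      using that Mem apply_op_mono[of S i op 3] apply_op_subset_insert[of op S 3 i] by fastforce
  qed
  obtain k where \<alpha>: "\<alpha> = NotMem k"
    using s3 S_bound by (cases \<alpha>) fastforce+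
  have "d \<in> S k" if "d \<in> {1, 2}" for d
  proof (rule ccontr)
    assume "d \<notin> S k"
    moreover have "sat \<beta> (apply_op op S d) 2"
      using \<beta> \<open>2 \<in> S i\<close> apply_op_mono by fastforce
    ultimately show False
      using rejected[OF accepted[of d 2]] \<alpha> that by auto
  qed
  then have "k = i" "1 \<in> S k"
    using S_unique \<open>2 \<in> S i\<close> by auto
  with \<open>1 \<notin> S i\<close> show False by simp
qed

theorem lemma6:
  "\<exists>L1 L2 :: ('a::finite) dword set.
     safa_recognizable L1 \<and> safa_recognizable L2 \<and> \<not> safa_recognizable (L1 \<inter> L2)"
proof (intro exI conjI)
  show "\<not> safa_recognizable (data_lang first_three_distinct \<inter> data_lang fourth_eq_second :: 'a dword set)"
    unfolding safa_recognizable_def data_lang_Int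
    using lang_neq_first_three_distinct_Int_fourth_eq_second by blast
qed (fact safa_recognizable_first_three_distinct safa_recognizable_fourth_eq_second)+

end
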